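(* Let $P=P_0+P_\delta\in\mathbb{R}^{p\times m}$, $Y_d\in\mathbb{R}^p$, plant $Y_k=PU_k+N_k$, $E_k=Y_d-Y_k$, $\bar U_k=-\Delta U_k$, $D_k=-\Delta N_k$, $\mathcal D_k=D_k+P_\delta\bar U_k$ (so $E_{k+1}=E_k+P_0\bar U_k+\mathcal D_k$), $\bar B_0=\begin{bmatrix}P_0\\0\end{bmatrix}$, $\bar L\in\mathbb{R}^{2p\times p}$, and the ESO $\hat{\bar{\mathcal X}}_{k+1}=(\bar A-\bar L\bar C)\hat{\bar{\mathcal X}}_k+\bar B_0\bar U_k+\bar LE_k$, $\hat{\bar{\mathcal X}}_k=\begin{bmatrix}\hat E_k\\\hat{\mathcal D}_k\end{bmatrix}$. Let $K\in\mathbb{R}^{m\times p}$, $\bar H\in\mathbb{R}^{p\times p}$, and apply $\bar U_k=-K(E_k+\bar H\hat{\mathcal D}_k)$. Then $\begin{bmatrix}E_{k+1}\\\hat{\bar{\mathcal X}}_{k+1}\end{bmatrix}=G\begin{bmatrix}E_{k}\\\hat{\bar{\mathcal X}}_{k}\end{bmatrix}+\begin{bmatrix}I\\0\end{bmatrix}\mathcal D_k$ with $G=\begin{bmatrix}I-P_0K&-P_0K\bar HF\\\bar L-\bar B_0K&\bar A-\bar L\bar C-\bar B_0K\bar HF\end{bmatrix}$, and with $T=\begin{bmatrix}I&0\\-\bar C^{\top}&I\end{bmatrix}$ one has $TGT^{-1}=\begin{bmatrix}I-P_0K&-P_0K\bar HF\\0&\bar A-\bar L\bar C\end{bmatrix}$.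 Hence the separation principle holds: the eigenvalues of $G$ are those of $I-P_0K$ together with those of $\bar A-\bar L\bar C$, and $K$, $\bar H$, $\bar L$ can be designed separately.
   Context: $\mathbb{Z}_+=\{0,1,2,\dots\}$; $\Delta f_k=f_{k+1}-f_k$. $U_k\in\mathbb{R}^m$ input, $Y_k\in\mathbb{R}^p$ output, $(N_k)\subset\mathbb{R}^p$ a bounded uncertainty; $P_0$ is a known nominal model and $P_\delta$ an unknown model uncertainty. $\bar A=\begin{bmatrix}I_p&I_p\\0&I_p\end{bmatrix}$, $\bar C=\begin{bmatrix}I_p&0\end{bmatrix}$, $F=\begin{bmatrix}0&I_p\end{bmatrix}$. *)

theory Defs
  imports "Jordan_Normal_Form.Matrix" "Jordan_Normal_Form.Char_Poly"
begin

definition Abar :: "nat \<Rightarrow> real mat" where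
  "Abar p = four_block_mat (1\<^sub>m p) (1\<^sub>m p) (0\<^sub>m p p) (1\<^sub>m p)"

definition Cbar :: "nat \<Rightarrow> real mat" where   (* [I_p  0], p x 2p *)
  "Cbar p = four_block_mat (1\<^sub>m p) (0\<^sub>m p p) (0\<^sub>m 0 p) (0\<^sub>m 0 p)"

definition Fm :: "nat \<Rightarrow> real mat" where     (* [0  I_p], p x 2p *)
  "Fm p = four_block_mat (0\<^sub>m p p) (1\<^sub>m p) (0\<^sub>m 0 p) (0\<^sub>m 0 p)"

definition B0 :: "nat \<Rightarrow> real mat \<Rightarrow> real mat" where   (* [P0; 0], 2p x m *)
  "B0 p P0 = four_block_mat P0 (0\<^sub>m p 0) (0\<^sub>m p (dim_col P0)) (0\<^sub>m p 0)"

definition Gmat :: "nat \<Rightarrow> real mat \<Rightarrow> real mat \<Rightarrow> real mat \<Rightarrow> real mat \<Rightarrow> real mat" where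
  "Gmat p P0 K H L = four_block_mat
     (1\<^sub>m p - P0 * K)               (- (P0 * K * H * Fm p))
     (L - B0 p P0 * K)  (Abar p - L * Cbar p - B0 p P0 * K * H * Fm p)"

definition Tmat :: "nat \<Rightarrow> real mat" where
  "Tmat p = four_block_mat (1\<^sub>m p) (0\<^sub>m p (2*p)) (- transpose_mat (Cbar p)) (1\<^sub>m (2*p))"

definition Tinv :: "nat \<Rightarrow> real mat" where
  "Tinv p = four_block_mat (1\<^sub>m p) (0\<^sub>m p (2*p)) (transpose_mat (Cbar p)) (1\<^sub>m (2*p))"

end

theory Submission
  imports Defs
begin

(* The closed loop is linear in the stacked state (E_k, Xhat_k): the plant gives the error recursion
   E_(k+1) = E_k + P0 Ubar_k + Dcal_k, and substituting the control law into it and into the observer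
   yields the transition matrix G.  Conjugating G by the lower unitriangular T = [I 0; -C^T I] kills the
   lower-left block, because F C^T = 0, C^T P0 = B0, C C^T = I and Abar C^T = C^T.  The resulting block
   upper triangular matrix has characteristic polynomial char_poly (I - P0 K) * char_poly (Abar - L C),
   which is the separation principle. *)

lemma lower_unitriangular_block_mat_inverse:
  fixes X :: "'a :: ring_1 mat"
  assumes X: "X \<in> carrier_mat k n"
  shows "four_block_mat (1\<^sub>m n) (0\<^sub>m n k) (- X) (1\<^sub>m k) * four_block_mat (1\<^sub>m n) (0\<^sub>m n k) X (1\<^sub>m k)
         = 1\<^sub>m (n + k)"
proof -
  have "- X + X = 0\<^sub>m k n" using X by (intro eq_matI) auto
  with X show ?thesis by (subst mult_four_block_mat[of _ n n _ k _ k _ _ n _ k]) auto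
qed

lemma block_triangularize_lower_unitriangular:
  fixes A B C D X :: "'a :: ring_1 mat"
  assumes A: "A \<in> carrier_mat n n" and B: "B \<in> carrier_mat n k"
    and C: "C \<in> carrier_mat k n" and D: "D \<in> carrier_mat k k" and X: "X \<in> carrier_mat k n"
    and BX: "B * X = 0\<^sub>m n n" and CX: "C = X * A - (D - X * B) * X"
  shows "four_block_mat (1\<^sub>m n) (0\<^sub>m n k) (- X) (1\<^sub>m k) * four_block_mat A B C D
           * four_block_mat (1\<^sub>m n) (0\<^sub>m n k) X (1\<^sub>m k)
         = four_block_mat A B (0\<^sub>m k n) (D - X * B)"
proof -
  have "four_block_mat (1\<^sub>m n) (0\<^sub>m n k) (- X) (1\<^sub>m k) * four_block_mat A B C D
        = four_block_mat A B (C - X * A) (D - X * B)"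
    using A B C D X by (subst mult_four_block_mat[of _ n n _ k _ k _ _ n _ k]) auto
  also have "\<dots> * four_block_mat (1\<^sub>m n) (0\<^sub>m n k) X (1\<^sub>m k)
      = four_block_mat (A + B * X) B (C - X * A + (D - X * B) * X) (D - X * B)"
    using A B C D X by (subst mult_four_block_mat[of _ n n _ k _ k _ _ n _ k]) auto
  also have "\<dots> = four_block_mat A B (0\<^sub>m k n) (D - X * B)"
  proof (rule cong_four_block_mat)
    show "A + B * X = A" using A BX by simp
    have "(D - X * B) * X \<in> carrier_mat k n" using D X B by auto
    then show "C - X * A + (D - X * B) * X = 0\<^sub>m k n"
      unfolding CX using A X by (intro eq_matI) auto
  qed simp_all
  finally show ?thesis .
qed

lemma char_poly_four_block_mat_lower_left_zero:
  fixes A B D :: "'a :: idom mat"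
  assumes A: "A \<in> carrier_mat n n" and B: "B \<in> carrier_mat n k" and D: "D \<in> carrier_mat k k"
  shows "char_poly (four_block_mat A B (0\<^sub>m k n) D) = char_poly A * char_poly D"
proof -
  let ?cm = "\<lambda>M. [:0, 1:] \<cdot>\<^sub>m 1\<^sub>m (dim_row M) + map_mat (\<lambda>a. [:- a:]) M"
  have "?cm (four_block_mat A B (0\<^sub>m k n) D)
        = four_block_mat (?cm A) (map_mat (\<lambda>a. [:- a:]) B) (0\<^sub>m k n) (?cm D)"
    using A B D by (intro eq_matI) (auto simp: one_poly_def)
  moreover have "det \<dots> = det (?cm A) * det (?cm D)"
    using A B D by (intro det_four_block_mat_lower_left_zero) auto
  ultimately show ?thesis unfolding char_poly_defs by simp
qed

lemma complex_eigenvalue_iff_of_char_poly_eq_mult: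
  fixes G A B :: "real mat"
  assumes G: "G \<in> carrier_mat n n" and A: "A \<in> carrier_mat k k" and B: "B \<in> carrier_mat l l"
    and char_poly_G: "char_poly G = char_poly A * char_poly B"
  shows "eigenvalue (map_mat complex_of_real G) z
         \<longleftrightarrow> eigenvalue (map_mat complex_of_real A) z \<or> eigenvalue (map_mat complex_of_real B) z"
proof -
  interpret of_real_poly_hom: map_poly_comm_ring_hom complex_of_real ..
  have "char_poly (map_mat complex_of_real G)
        = char_poly (map_mat complex_of_real A) * char_poly (map_mat complex_of_real B)"
    using G A B by (simp add: of_real_hom.char_poly_hom char_poly_G of_real_poly_hom.hom_mult)
  then show ?thesis
    using G A B by (simp add: eigenvalue_root_char_poly[of _ n] eigenvalue_root_char_poly[of _ k]
        eigenvalue_root_char_poly[of _ l])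
qed

lemma mult_mat_vec_uminus:
  fixes A :: "'a :: ring mat"
  assumes "A \<in> carrier_mat n m" and "v \<in> carrier_vec m"
  shows "A *\<^sub>v (- v) = - (A *\<^sub>v v)"
  using assms by (intro eq_vecI) auto

lemma mult_mat_vec_feedback:
  fixes A :: "'a :: ring mat"
  assumes A: "A \<in> carrier_mat n m" and K: "K \<in> carrier_mat m q" and H: "H \<in> carrier_mat q r"
    and F: "F \<in> carrier_mat r s" and e: "e \<in> carrier_vec q" and x: "x \<in> carrier_vec s"
  shows "A *\<^sub>v (- (K *\<^sub>v (e + H *\<^sub>v (F *\<^sub>v x)))) = - (A * K *\<^sub>v e) - (A * K * H * F *\<^sub>v x)"
proof -
  have AK: "A * K \<in> carrier_mat n q" and AKH: "A * K * H \<in> carrier_mat n r"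
    and Fx: "F *\<^sub>v x \<in> carrier_vec r" and HFx: "H *\<^sub>v (F *\<^sub>v x) \<in> carrier_vec q"
    using A K H F x by auto
  have "A *\<^sub>v (- (K *\<^sub>v (e + H *\<^sub>v (F *\<^sub>v x))))
        = - (A *\<^sub>v (K *\<^sub>v e) + A *\<^sub>v (K *\<^sub>v (H *\<^sub>v (F *\<^sub>v x))))"
    using A K H F e x by (simp add: mult_mat_vec_uminus[OF A] mult_add_distrib_mat_vec[OF K]
        mult_add_distrib_mat_vec[OF A])
  also have "\<dots> = - (A * K *\<^sub>v e) - (A * K * H * F *\<^sub>v x)"
    using A K e HFx by (simp only: assoc_mult_mat_vec[OF AKH F x] assoc_mult_mat_vec[OF AK H Fx]
        assoc_mult_mat_vec[OF A K HFx] assoc_mult_mat_vec[OF A K e]) (intro eq_vecI, auto)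
  finally show ?thesis .
qed

lemma Abar_carrier[simp]: "Abar p \<in> carrier_mat (2*p) (2*p)"
  using four_block_carrier_mat[of "1\<^sub>m p" p p "1\<^sub>m p :: real mat" p p] unfolding Abar_def by (simp add: mult_2)

lemma Cbar_carrier[simp]: "Cbar p \<in> carrier_mat p (2*p)"
  using four_block_carrier_mat[of "1\<^sub>m p" p p "0\<^sub>m 0 p :: real mat" 0 p] unfolding Cbar_def by (simp add: mult_2)

lemma Fm_carrier[simp]: "Fm p \<in> carrier_mat p (2*p)"
  using four_block_carrier_mat[of "0\<^sub>m p p" p p "0\<^sub>m 0 p :: real mat" 0 p] unfolding Fm_def by (simp add: mult_2)

lemma B0_carrier[simp]: "P0 \<in> carrier_mat p m \<Longrightarrow> B0 p P0 \<in> carrier_mat (2*p) m"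
  using four_block_carrier_mat[of P0 p m "0\<^sub>m p 0" p 0] unfolding B0_def by (simp add: mult_2)

lemma transpose_Cbar: "transpose_mat (Cbar p) = four_block_mat (1\<^sub>m p) (0\<^sub>m p 0) (0\<^sub>m p p) (0\<^sub>m p 0)"
  unfolding Cbar_def by (subst transpose_four_block_mat) auto

lemma Fm_mult_transpose_Cbar: "Fm p * transpose_mat (Cbar p) = 0\<^sub>m p p"
  unfolding transpose_Cbar Fm_def by (subst mult_four_block_mat[of _ p p _ p _ 0 _ _ p _ 0]) auto

lemma Cbar_mult_transpose_Cbar: "Cbar p * transpose_mat (Cbar p) = 1\<^sub>m p"
  unfolding transpose_Cbar unfolding Cbar_def by (subst mult_four_block_mat[of _ p p _ p _ 0 _ _ p _ 0]) auto

lemma Abar_mult_transpose_Cbar: "Abar p * transpose_mat (Cbar p) = transpose_mat (Cbar p)"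
  unfolding transpose_Cbar Abar_def by (subst mult_four_block_mat[of _ p p _ p _ p _ _ p _ 0]) auto

lemma transpose_Cbar_mult:
  assumes "P0 \<in> carrier_mat p m"
  shows "transpose_mat (Cbar p) * P0 = B0 p P0"
proof -
  have "P0 = four_block_mat P0 (0\<^sub>m p 0) (0\<^sub>m 0 m) (0\<^sub>m 0 0)"
    using assms by (intro eq_matI) auto
  then have "transpose_mat (Cbar p) * P0 = four_block_mat (1\<^sub>m p) (0\<^sub>m p 0) (0\<^sub>m p p) (0\<^sub>m p 0)
      * four_block_mat P0 (0\<^sub>m p 0) (0\<^sub>m 0 m) (0\<^sub>m 0 0)"
    unfolding transpose_Cbar by simp
  also have "\<dots> = B0 p P0"
    unfolding B0_def using assms by (subst mult_four_block_mat[of _ p p _ 0 _ p _ _ m _ 0]) auto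
  finally show ?thesis .
qed

lemma mult_Fm_mult_transpose_Cbar:
  assumes M: "M \<in> carrier_mat n p"
  shows "M * Fm p * transpose_mat (Cbar p) = 0\<^sub>m n p"
proof -
  have Ct: "transpose_mat (Cbar p) \<in> carrier_mat (2*p) p" by simp
  show ?thesis
    by (simp add: assoc_mult_mat[OF M Fm_carrier Ct] Fm_mult_transpose_Cbar right_mult_zero_mat[OF M])
qed

lemma observer_mat_mult_transpose_Cbar:
  assumes L: "L \<in> carrier_mat (2*p) p"
  shows "(Abar p - L * Cbar p) * transpose_mat (Cbar p) = transpose_mat (Cbar p) - L"
proof -
  have Ct: "transpose_mat (Cbar p) \<in> carrier_mat (2*p) p" by simp
  with L show ?thesis
    by (simp add: minus_mult_distrib_mat[OF Abar_carrier _ Ct] assoc_mult_mat[OF L Cbar_carrier Ct]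
        Abar_mult_transpose_Cbar Cbar_mult_transpose_Cbar)
qed

lemma Tmat_carrier: "Tmat p \<in> carrier_mat (3*p) (3*p)"
proof -
  have "Tmat p \<in> carrier_mat (p + 2*p) (p + 2*p)"
    unfolding Tmat_def by (intro four_block_carrier_mat) auto
  then show ?thesis by simp
qed

lemma Tinv_carrier: "Tinv p \<in> carrier_mat (3*p) (3*p)"
proof -
  have "Tinv p \<in> carrier_mat (p + 2*p) (p + 2*p)"
    unfolding Tinv_def by (intro four_block_carrier_mat) auto
  then show ?thesis by simp
qed

lemma Tmat_mult_Tinv: "Tmat p * Tinv p = 1\<^sub>m (3*p)"
  using lower_unitriangular_block_mat_inverse[of "transpose_mat (Cbar p)" "2*p" p]
  unfolding Tmat_def Tinv_def by simp

lemma Tinv_mult_Tmat: "Tinv p * Tmat p = 1\<^sub>m (3*p)"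
  using lower_unitriangular_block_mat_inverse[of "- transpose_mat (Cbar p)" "2*p" p]
  unfolding Tmat_def Tinv_def by simp

lemma Gmat_carrier:
  assumes "P0 \<in> carrier_mat p m" and "K \<in> carrier_mat m p" and "H \<in> carrier_mat p p"
    and "L \<in> carrier_mat (2*p) p"
  shows "Gmat p P0 K H L \<in> carrier_mat (3*p) (3*p)"
proof -
  have "Gmat p P0 K H L \<in> carrier_mat (p + 2*p) (p + 2*p)"
    unfolding Gmat_def using assms by (intro four_block_carrier_mat) (auto intro!: minus_carrier_mat mult_carrier_mat)
  then show ?thesis by simp
qed

lemma Tmat_Gmat_Tinv:
  assumes P0: "P0 \<in> carrier_mat p m" and K: "K \<in> carrier_mat m p" and H: "H \<in> carrier_mat p p"
    and L: "L \<in> carrier_mat (2*p) p"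
  shows "Tmat p * Gmat p P0 K H L * Tinv p
           = four_block_mat (1\<^sub>m p - P0 * K) (- (P0 * K * H * Fm p)) (0\<^sub>m (2*p) p) (Abar p - L * Cbar p)"
proof -
  let ?Ct = "transpose_mat (Cbar p)" and ?M = "P0 * K * H" and ?N = "B0 p P0 * K * H"
  let ?D = "Abar p - L * Cbar p - ?N * Fm p"
  have Ct: "?Ct \<in> carrier_mat (2*p) p" by simp
  note [simp] = carrier_matD[OF Abar_carrier] carrier_matD[OF Cbar_carrier] carrier_matD[OF Fm_carrier]
  have PK: "P0 * K \<in> carrier_mat p p" and M: "?M \<in> carrier_mat p p"
    and BK: "B0 p P0 * K \<in> carrier_mat (2*p) p" and N: "?N \<in> carrier_mat (2*p) p"
    and A: "1\<^sub>m p - P0 * K \<in> carrier_mat p p" and B: "- (?M * Fm p) \<in> carrier_mat p (2*p)"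
    and C: "L - B0 p P0 * K \<in> carrier_mat (2*p) p" and D: "?D \<in> carrier_mat (2*p) (2*p)"
    using P0 K H L by (auto intro!: minus_carrier_mat mult_carrier_mat)
  have Ct_PK: "?Ct * (P0 * K) = B0 p P0 * K"
    by (simp add: assoc_mult_mat[OF Ct P0 K, symmetric] transpose_Cbar_mult[OF P0])
  have "?Ct * ?M = ?N"
    by (simp add: assoc_mult_mat[OF Ct PK H, symmetric] Ct_PK)
  then have Ct_MF: "?Ct * (?M * Fm p) = ?N * Fm p"
    by (simp add: assoc_mult_mat[OF Ct M Fm_carrier, symmetric])
  have "?M * Fm p * ?Ct = 0\<^sub>m p p"
    using M by (rule mult_Fm_mult_transpose_Cbar)
  moreover have "- (?M * Fm p) * ?Ct = - (?M * Fm p * ?Ct)"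
    by (intro uminus_mult_left_mat) simp
  ultimately have BX: "- (?M * Fm p) * ?Ct = 0\<^sub>m p p"
    by (simp, intro eq_matI, auto)
  have "?Ct * - (?M * Fm p) = - (?N * Fm p)"
    using P0 by (subst uminus_mult_right_mat) (simp_all add: Ct_MF)
  then have D_XB: "?D - ?Ct * - (?M * Fm p) = Abar p - L * Cbar p"
    using N L by (intro eq_matI) auto
  have "(Abar p - L * Cbar p) * ?Ct = ?Ct - L"
    using L by (rule observer_mat_mult_transpose_Cbar)
  moreover have "?Ct * (1\<^sub>m p - P0 * K) = ?Ct - B0 p P0 * K"
    using PK by (simp add: mult_minus_distrib_mat[OF Ct _ PK] Ct_PK)
  ultimately have CX: "L - B0 p P0 * K = ?Ct * (1\<^sub>m p - P0 * K) - (?D - ?Ct * - (?M * Fm p)) * ?Ct"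
    unfolding D_XB using carrier_matD[OF BK] L by (intro eq_matI) auto
  have "Tmat p * Gmat p P0 K H L * Tinv p
        = four_block_mat (1\<^sub>m p - P0 * K) (- (?M * Fm p)) (0\<^sub>m (2*p) p) (?D - ?Ct * - (?M * Fm p))"
    unfolding Tmat_def Gmat_def Tinv_def by (rule block_triangularize_lower_unitriangular[OF A B C D Ct BX CX])
  then show ?thesis unfolding D_XB .
qed

lemma char_poly_Gmat:
  assumes P0: "P0 \<in> carrier_mat p m" and K: "K \<in> carrier_mat m p" and H: "H \<in> carrier_mat p p"
    and L: "L \<in> carrier_mat (2*p) p"
  shows "char_poly (Gmat p P0 K H L) = char_poly (1\<^sub>m p - P0 * K) * char_poly (Abar p - L * Cbar p)"
proof -
  have "similar_mat (Tmat p * Gmat p P0 K H L * Tinv p) (Gmat p P0 K H L)"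
    using Tmat_mult_Tinv Tinv_mult_Tmat Tmat_carrier Tinv_carrier Gmat_carrier[OF assms]
    by (intro similar_matI[where n = "3*p"]) (auto intro!: mult_carrier_mat)
  then have "char_poly (Gmat p P0 K H L) = char_poly (four_block_mat (1\<^sub>m p - P0 * K)
      (- (P0 * K * H * Fm p)) (0\<^sub>m (2*p) p) (Abar p - L * Cbar p))"
    by (simp add: char_poly_similar Tmat_Gmat_Tinv[OF assms])
  also have "\<dots> = char_poly (1\<^sub>m p - P0 * K) * char_poly (Abar p - L * Cbar p)"
    using assms by (intro char_poly_four_block_mat_lower_left_zero) (auto intro!: minus_carrier_mat mult_carrier_mat)
  finally show ?thesis .
qed

lemma tracking_error_Suc:
  fixes P0 Pd :: "'a :: ring mat"
  assumes P0: "P0 \<in> carrier_mat p m" and Pd: "Pd \<in> carrier_mat p m" and Yd: "Yd \<in> carrier_vec p"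
    and U: "\<And>k. U k \<in> carrier_vec m" and N: "\<And>k. N k \<in> carrier_vec p"
    and plant: "\<And>k. Y k = (P0 + Pd) *\<^sub>v U k + N k"
    and err: "\<And>k. E k = Yd - Y k"
    and Ubar: "\<And>k. Ubar k = - (U (Suc k) - U k)"
    and D: "\<And>k. D k = - (N (Suc k) - N k)"
    and Dcal: "\<And>k. Dcal k = D k + Pd *\<^sub>v Ubar k"
  shows "E (Suc k) = E k + P0 *\<^sub>v Ubar k + Dcal k"
proof -
  have "Ubar k = U k - U (Suc k)"
    unfolding Ubar using U[of k] U[of "Suc k"] by (intro eq_vecI) auto
  then have "P0 *\<^sub>v Ubar k = P0 *\<^sub>v U k - P0 *\<^sub>v U (Suc k)" and "Pd *\<^sub>v Ubar k = Pd *\<^sub>v U k - Pd *\<^sub>v U (Suc k)"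
    using P0 Pd U by (simp_all add: mult_minus_distrib_mat_vec)
  moreover have "(P0 + Pd) *\<^sub>v U j = P0 *\<^sub>v U j + Pd *\<^sub>v U j" for j
    using P0 Pd U by (rule add_mult_distrib_mat_vec)
  ultimately show ?thesis
    unfolding err plant Dcal D using P0 Pd U[of k] U[of "Suc k"] N[of k] N[of "Suc k"] Yd
    by (intro eq_vecI) auto
qed

lemma Gmat_mult_append_vec:
  assumes P0: "P0 \<in> carrier_mat p m" and K: "K \<in> carrier_mat m p" and H: "H \<in> carrier_mat p p"
    and L: "L \<in> carrier_mat (2*p) p" and e: "e \<in> carrier_vec p" and x: "x \<in> carrier_vec (2*p)"
    and u: "u = - (K *\<^sub>v (e + H *\<^sub>v (Fm p *\<^sub>v x)))"
  shows "Gmat p P0 K H L *\<^sub>v (e @\<^sub>v x)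
         = (e + P0 *\<^sub>v u) @\<^sub>v ((Abar p - L * Cbar p) *\<^sub>v x + B0 p P0 *\<^sub>v u + L *\<^sub>v e)"
proof -
  have B: "B0 p P0 \<in> carrier_mat (2*p) m" using P0 by simp
  have PK: "P0 * K \<in> carrier_mat p p" and PKHF: "P0 * K * H * Fm p \<in> carrier_mat p (2*p)"
    and BK: "B0 p P0 * K \<in> carrier_mat (2*p) p" and BKHF: "B0 p P0 * K * H * Fm p \<in> carrier_mat (2*p) (2*p)"
    and ALC: "Abar p - L * Cbar p \<in> carrier_mat (2*p) (2*p)"
    using P0 B K H L by (auto intro!: minus_carrier_mat mult_carrier_mat)
  have "Gmat p P0 K H L *\<^sub>v (e @\<^sub>v x)
        = ((1\<^sub>m p - P0 * K) *\<^sub>v e + - (P0 * K * H * Fm p) *\<^sub>v x)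
          @\<^sub>v ((L - B0 p P0 * K) *\<^sub>v e + (Abar p - L * Cbar p - B0 p P0 * K * H * Fm p) *\<^sub>v x)"
    unfolding Gmat_def using PK PKHF BK BKHF ALC L e x
    by (intro four_block_mat_mult_vec) (auto intro!: minus_carrier_mat)
  also have "\<dots> = (e + P0 *\<^sub>v u) @\<^sub>v ((Abar p - L * Cbar p) *\<^sub>v x + B0 p P0 *\<^sub>v u + L *\<^sub>v e)"
    unfolding u mult_mat_vec_feedback[OF P0 K H Fm_carrier e x] mult_mat_vec_feedback[OF B K H Fm_carrier e x]
    using PK PKHF BK BKHF ALC L e x
    by (simp add: minus_mult_distrib_mat_vec[OF one_carrier_mat PK e] minus_mult_distrib_mat_vec[OF L BK e]
        minus_mult_distrib_mat_vec[OF ALC BKHF x]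
        carrier_matD[OF PKHF], intro conjI eq_vecI, auto)
  finally show ?thesis .
qed

lemma Gmat_closed_loop_step:
  assumes P0: "P0 \<in> carrier_mat p m" and K: "K \<in> carrier_mat m p" and H: "H \<in> carrier_mat p p"
    and L: "L \<in> carrier_mat (2*p) p" and e: "e \<in> carrier_vec p" and x: "x \<in> carrier_vec (2*p)"
    and d: "d \<in> carrier_vec p" and u: "u = - (K *\<^sub>v (e + H *\<^sub>v (Fm p *\<^sub>v x)))"
  shows "(e + P0 *\<^sub>v u + d) @\<^sub>v ((Abar p - L * Cbar p) *\<^sub>v x + B0 p P0 *\<^sub>v u + L *\<^sub>v e)
         = Gmat p P0 K H L *\<^sub>v (e @\<^sub>v x) + (d @\<^sub>v 0\<^sub>v (2*p))"
proof -
  have u_carrier: "u \<in> carrier_vec m" using K unfolding u carrier_vec_def by simp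
  have "Abar p - L * Cbar p \<in> carrier_mat (2*p) (2*p)"
    using L by (auto intro!: minus_carrier_mat mult_carrier_mat)
  then have "(Abar p - L * Cbar p) *\<^sub>v x + B0 p P0 *\<^sub>v u + L *\<^sub>v e \<in> carrier_vec (2*p)"
    using mult_mat_vec_carrier[OF B0_carrier[OF P0] u_carrier] L e x by simp
  moreover have "e + P0 *\<^sub>v u \<in> carrier_vec p" using P0 e u_carrier by simp
  ultimately show ?thesis
    using d unfolding Gmat_mult_append_vec[OF P0 K H L e x u] by (simp add: append_vec_add)
qed

theorem lemma6:
  fixes p m :: nat
    and P0 Pd K H L :: "real mat"
    and Yd :: "real vec"
    and U N Y E Ubar D Dcal Xhat :: "nat \<Rightarrow> real vec"
  assumes P0: "P0 \<in> carrier_mat p m" and Pd: "Pd \<in> carrier_mat p m"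
    and K: "K \<in> carrier_mat m p" and H: "H \<in> carrier_mat p p"
    and L: "L \<in> carrier_mat (2*p) p"
    and Yd: "Yd \<in> carrier_vec p"
    and U: "\<And>k. U k \<in> carrier_vec m" and N: "\<And>k. N k \<in> carrier_vec p"
    and Xhat: "\<And>k. Xhat k \<in> carrier_vec (2*p)"
    and plant: "\<And>k. Y k = (P0 + Pd) *\<^sub>v U k + N k"
    and err: "\<And>k. E k = Yd - Y k"
    and Ubar: "\<And>k. Ubar k = - (U (Suc k) - U k)"
    and D: "\<And>k. D k = - (N (Suc k) - N k)"
    and Dcal: "\<And>k. Dcal k = D k + Pd *\<^sub>v Ubar k"
    and ESO: "\<And>k. Xhat (Suc k) = (Abar p - L * Cbar p) *\<^sub>v Xhat k
                    + B0 p P0 *\<^sub>v Ubar k + L *\<^sub>v E k"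
    and control: "\<And>k. Ubar k = - (K *\<^sub>v (E k + H *\<^sub>v (Fm p *\<^sub>v Xhat k)))"
  shows "(\<forall>k. E (Suc k) @\<^sub>v Xhat (Suc k)
              = Gmat p P0 K H L *\<^sub>v (E k @\<^sub>v Xhat k) + (Dcal k @\<^sub>v 0\<^sub>v (2*p)))
       \<and> Tmat p * Tinv p = 1\<^sub>m (3*p) \<and> Tinv p * Tmat p = 1\<^sub>m (3*p)
       \<and> Tmat p * Gmat p P0 K H L * Tinv p
           = four_block_mat (1\<^sub>m p - P0 * K) (- (P0 * K * H * Fm p))
                            (0\<^sub>m (2*p) p) (Abar p - L * Cbar p)
       \<and> char_poly (Gmat p P0 K H L)
           = char_poly (1\<^sub>m p - P0 * K) * char_poly (Abar p - L * Cbar p)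
       \<and> (\<forall>z::complex. eigenvalue (map_mat complex_of_real (Gmat p P0 K H L)) z
            \<longleftrightarrow> eigenvalue (map_mat complex_of_real (1\<^sub>m p - P0 * K)) z
              \<or> eigenvalue (map_mat complex_of_real (Abar p - L * Cbar p)) z)"
proof -
  have E_carrier: "E k \<in> carrier_vec p" for k
    using add_carrier_mat[OF Pd, of P0] U[of k] N[of k] Yd by (simp add: err plant)
  have Dcal_carrier: "Dcal k \<in> carrier_vec p" for k
    using Pd U[of k] U[of "Suc k"] N[of k] N[of "Suc k"] by (simp add: Dcal D Ubar)
  have E_Suc: "E (Suc k) = E k + P0 *\<^sub>v Ubar k + Dcal k" for k
    using P0 Pd Yd U N plant err Ubar D Dcal by (rule tracking_error_Suc)
  have "E (Suc k) @\<^sub>v Xhat (Suc k) = Gmat p P0 K H L *\<^sub>v (E k @\<^sub>v Xhat k) + (Dcal k @\<^sub>v 0\<^sub>v (2*p))" for k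
    unfolding E_Suc ESO
    using P0 K H L E_carrier Xhat Dcal_carrier control by (rule Gmat_closed_loop_step)
  moreover have "char_poly (Gmat p P0 K H L)
      = char_poly (1\<^sub>m p - P0 * K) * char_poly (Abar p - L * Cbar p)"
    using P0 K H L by (rule char_poly_Gmat)
  moreover have "1\<^sub>m p - P0 * K \<in> carrier_mat p p" and "Abar p - L * Cbar p \<in> carrier_mat (2*p) (2*p)"
    using P0 K L by (auto intro!: minus_carrier_mat mult_carrier_mat)
  ultimately show ?thesis
    using Tmat_mult_Tinv Tinv_mult_Tmat Tmat_Gmat_Tinv[OF P0 K H L] Gmat_carrier[OF P0 K H L]
      complex_eigenvalue_iff_of_char_poly_eq_mult by blast
qed

end
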